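(* Let $\sigma$ be a pre-weight function and $\mathfrak{M}_\sigma=\{S^{(x)}:x>0\}$ its associated weight matrix. For $k\in\mathbb{N}_{\ge1}$ let $\Lambda^k=\{a\in\mathbb{C}^{\mathbb{N}}:\sup_{j\in\mathbb{N}}|a_j|/(k^jS^{(k)}_j)<\infty\}$, a Banach space with this supremum as norm. Then the inclusion $\Lambda^k\hookrightarrow\Lambda^{k+1}$ is compact. In particular, $\Lambda^{\{\mathfrak{M}_\sigma\}}=\operatorname{ind}_{k}\Lambda^k$ (the inductive limit) is a (DFS)-space.
   Context: A pre-weight function is a continuous increasing $\sigma:[0,\infty)\to[0,\infty)$ with $\sigma(0)=0$, $\sigma(t)\to\infty$, $\log t=o(\sigma(t))$, $t\mapsto\sigma(e^t)$ convex. $\varphi^*_\sigma(x)=\sup_{y\ge0}(xy-\sigma(e^y))$, and $S^{(x)}_j=\exp(\frac1x\varphi^*_\sigma(xj))$. A (DFS)-space is a countable inductive limit of Banach spaces with compact connecting maps. *)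

theory Defs
  imports "HOL-Analysis.Analysis" "HOL-Library.Landau_Symbols"
begin

definition pre_weight :: "(real \<Rightarrow> real) \<Rightarrow> bool" where
  "pre_weight \<sigma> \<longleftrightarrow>
     continuous_on {0..} \<sigma> \<and>
     mono_on {0..} \<sigma> \<and>
     (\<forall>t\<ge>0. \<sigma> t \<ge> 0) \<and>
     \<sigma> 0 = 0 \<and>
     filterlim \<sigma> at_top at_top \<and>
     (\<lambda>t. ln t) \<in> o[at_top](\<sigma>) \<and>
     convex_on UNIV (\<lambda>t. \<sigma> (exp t))"

definition phi_star :: "(real \<Rightarrow> real) \<Rightarrow> real \<Rightarrow> real" where
  "phi_star \<sigma> x = (SUP y\<in>{0..}. x * y - \<sigma> (exp y))"

definition S_seq :: "(real \<Rightarrow> real) \<Rightarrow> real \<Rightarrow> nat \<Rightarrow> real" where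
  "S_seq \<sigma> x j = exp ((1 / x) * phi_star \<sigma> (x * real j))"

definition Lweight :: "(real \<Rightarrow> real) \<Rightarrow> nat \<Rightarrow> nat \<Rightarrow> real" where
  "Lweight \<sigma> k j = real k ^ j * S_seq \<sigma> (real k) j"

definition Lambda :: "(real \<Rightarrow> real) \<Rightarrow> nat \<Rightarrow> (nat \<Rightarrow> complex) set" where
  "Lambda \<sigma> k = {a. bdd_above (range (\<lambda>j. cmod (a j) / Lweight \<sigma> k j))}"

definition Lnorm :: "(real \<Rightarrow> real) \<Rightarrow> nat \<Rightarrow> (nat \<Rightarrow> complex) \<Rightarrow> real" where
  "Lnorm \<sigma> k a = (SUP j. cmod (a j) / Lweight \<sigma> k j)"

definition compact_inclusion :: "(real \<Rightarrow> real) \<Rightarrow> nat \<Rightarrow> nat \<Rightarrow> bool" where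
  "compact_inclusion \<sigma> k l \<longleftrightarrow>
     Lambda \<sigma> k \<subseteq> Lambda \<sigma> l \<and>
     (\<forall>u :: nat \<Rightarrow> nat \<Rightarrow> complex.
        (\<forall>n. u n \<in> Lambda \<sigma> k) \<and> (\<exists>B. \<forall>n. Lnorm \<sigma> k (u n) \<le> B) \<longrightarrow>
        (\<exists>r b. strict_mono r \<and> b \<in> Lambda \<sigma> l \<and>
               (\<lambda>n. Lnorm \<sigma> l (\<lambda>j. u (r n) j - b j)) \<longlonglongrightarrow> 0))"

end

theory Submission
  imports Defs
begin

(* Since phi_star sigma (x j) / x = sup_y (j y - sigma(e^y) / x) and sigma >= 0, this quantity
   increases with x, so S^(k) <= S^(k+1) and the weight ratio k^j S^(k)_j / ((k+1)^j S^(k+1)_j)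
   is at most (k/(k+1))^j, which tends to 0. A bounded sequence in Lambda^k is bounded in each
   coordinate, so by Tychonoff in the metrizable product of closed discs it has a coordinatewise
   convergent subsequence. In the Lambda^(k+1)-norm of the differences, the tail coordinates are
   uniformly small by the vanishing weight ratio, and the finitely many others converge. *)

lemma pointwise_convergent_subseq:
  fixes u :: "nat \<Rightarrow> 'i::countable \<Rightarrow> 'a::{real_normed_vector,heine_borel}"
  assumes "\<And>n i. norm (u n i) \<le> M i"
  shows "\<exists>r b. strict_mono r \<and> (\<forall>i. (\<lambda>n. u (r n) i) \<longlonglongrightarrow> b i)"
proof -
  let ?K = "PiE UNIV (\<lambda>i. cball (0::'a) (M i))"
  have "compact ?K"
    using compactin_PiE[of "\<lambda>i. euclidean" UNIV "\<lambda>i. cball (0::'a) (M i)"]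
    by (simp add: euclidean_product_topology)
  moreover have "u n \<in> ?K" for n
    using assms by auto
  ultimately obtain r b where r: "strict_mono r" and lim: "(u \<circ> r) \<longlonglongrightarrow> b"
    using compact_imp_seq_compact unfolding seq_compact_def by metis
  have "(\<lambda>n. u (r n) i) \<longlonglongrightarrow> b i" for i
  proof -
    have "isCont (\<lambda>x. x i) b"
      by (metis UNIV_I continuous_on_eq_continuous_at continuous_on_product_coordinates open_UNIV)
    from isCont_tendsto_compose[OF this lim] show ?thesis
      by (simp add: comp_def)
  qed
  with r show ?thesis by blast
qed

lemma bdd_above_range_if_dominated:
  fixes f g :: "'a \<Rightarrow> 'b::preorder"
  assumes "bdd_above (range g)" and "\<And>x. f x \<le> g x"
  shows "bdd_above (range f)"
proof -
  obtain M where "\<And>x. g x \<le> M"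
    using assms(1) by (auto simp: bdd_above_def)
  then show ?thesis
    using assms(2) by (intro bdd_aboveI2[of UNIV f M]) (blast intro: order_trans)
qed

lemma tendsto_SUP_zero_if_dominated:
  fixes g :: "nat \<Rightarrow> nat \<Rightarrow> real"
  assumes nonneg: "\<And>n j. 0 \<le> g n j" and dominated: "\<And>n j. g n j \<le> h j"
    and h: "h \<longlonglongrightarrow> 0" and pointwise: "\<And>j. (\<lambda>n. g n j) \<longlonglongrightarrow> 0"
  shows "(\<lambda>n. SUP j. g n j) \<longlonglongrightarrow> 0"
proof (rule LIMSEQ_I)
  fix e :: real
  assume "0 < e"
  then obtain J where J: "\<And>j. J \<le> j \<Longrightarrow> h j < e / 2"
    using order_tendstoD(2)[OF h, of "e / 2"] \<open>0 < e\<close> by (auto simp: eventually_sequentially)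
  have "\<forall>\<^sub>F n in sequentially. \<forall>j\<in>{..<J}. g n j < e / 2"
    using \<open>0 < e\<close> pointwise by (intro eventually_ball_finite ballI order_tendstoD(2)) auto
  then obtain N where N: "\<And>n j. N \<le> n \<Longrightarrow> j < J \<Longrightarrow> g n j < e / 2"
    by (auto simp: eventually_sequentially)
  have "norm ((SUP j. g n j) - 0) < e" if "N \<le> n" for n
  proof -
    have "g n j \<le> e / 2" for j
      using N[OF that, of j] J[of j] dominated[of n j] by (cases "j < J") auto
    then have "(SUP j. g n j) \<le> e / 2"
      by (intro cSUP_least) auto
    moreover have "bdd_above (range (g n))"
      using Bseq_bdd_above[OF convergent_imp_Bseq[OF convergentI[OF h]]] dominated
      by (rule bdd_above_range_if_dominated)
    then have "0 \<le> (SUP j. g n j)"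
      using nonneg by (intro cSUP_upper2[of _ _ 0]) auto
    ultimately show ?thesis
      using \<open>0 < e\<close> by simp
  qed
  then show "\<exists>N. \<forall>n\<ge>N. norm ((SUP j. g n j) - 0) < e"
    by blast
qed

lemma weighted_sup_convergent_subseq:
  fixes u :: "nat \<Rightarrow> nat \<Rightarrow> 'a::{real_normed_vector,heine_borel}" and w v :: "nat \<Rightarrow> real"
  assumes v: "\<And>j. 0 < v j" and ratio: "(\<lambda>j. w j / v j) \<longlonglongrightarrow> 0"
    and bound: "\<And>n j. norm (u n j) \<le> B * w j"
  shows "\<exists>r b. strict_mono r \<and> bdd_above (range (\<lambda>j. norm (b j) / v j)) \<and>
           (\<lambda>n. SUP j. norm (u (r n) j - b j) / v j) \<longlonglongrightarrow> 0"
proof -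
  obtain r b where r: "strict_mono r" and lim: "\<And>j. (\<lambda>n. u (r n) j) \<longlonglongrightarrow> b j"
    using pointwise_convergent_subseq[of u "\<lambda>j. B * w j"] bound by blast
  have b: "norm (b j) \<le> B * w j" for j
    using bound by (intro tendsto_upperbound[OF tendsto_norm[OF lim]]) auto
  have "(\<lambda>j. B * (w j / v j)) \<longlonglongrightarrow> 0"
    using tendsto_mult_right_zero[OF ratio] .
  then have "bdd_above (range (\<lambda>j. B * (w j / v j)))"
    by (rule Bseq_bdd_above[OF convergent_imp_Bseq[OF convergentI]])
  moreover have "norm (b j) / v j \<le> B * (w j / v j)" for j
    using b[of j] v[of j] by (simp add: divide_right_mono)
  ultimately have "bdd_above (range (\<lambda>j. norm (b j) / v j))"
    by (rule bdd_above_range_if_dominated)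
  moreover have "(\<lambda>n. SUP j. norm (u (r n) j - b j) / v j) \<longlonglongrightarrow> 0"
  proof (rule tendsto_SUP_zero_if_dominated)
    show "norm (u (r n) j - b j) / v j \<le> 2 * B * (w j / v j)" for n j
    proof -
      have "norm (u (r n) j - b j) \<le> 2 * B * w j"
        using norm_triangle_ineq4[of "u (r n) j" "b j"] bound[of "r n" j] b[of j] by simp
      then show ?thesis
        using v[of j] by (simp add: divide_right_mono)
    qed
    show "(\<lambda>j. 2 * B * (w j / v j)) \<longlonglongrightarrow> 0"
      using tendsto_mult_right_zero[OF ratio] .
    show "(\<lambda>n. norm (u (r n) j - b j) / v j) \<longlonglongrightarrow> 0" for j
      using tendsto_divide[OF tendsto_norm[OF Lim_null[THEN iffD1, OF lim]] tendsto_const, of "v j"]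
        v[of j] by simp
    show "0 \<le> norm (u (r n) j - b j) / v j" for n j
      using v[of j] by simp
  qed
  ultimately show ?thesis
    using r by blast
qed

lemma pre_weight_nonneg: "pre_weight \<sigma> \<Longrightarrow> 0 \<le> t \<Longrightarrow> 0 \<le> \<sigma> t"
  unfolding pre_weight_def by auto

lemma pre_weight_eventually_linear_le:
  assumes "pre_weight \<sigma>"
  shows "\<forall>\<^sub>F y in at_top. c * y \<le> \<sigma> (exp y)"
proof (cases "c > 0")
  case True
  have "(\<lambda>t. ln t) \<in> o[at_top](\<sigma>)"
    using assms unfolding pre_weight_def by auto
  then have "\<forall>\<^sub>F t in at_top. norm (ln t) \<le> (1 / c) * norm (\<sigma> t)"
    using True by (intro landau_o.smallD) auto
  then have "\<forall>\<^sub>F y in at_top. norm (ln (exp y)) \<le> (1 / c) * norm (\<sigma> (exp y))"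
    using exp_at_top
    by (rule eventually_compose_filterlim[where P = "\<lambda>t. norm (ln t) \<le> (1 / c) * norm (\<sigma> t)"])
  moreover have "\<forall>\<^sub>F y in at_top. 0 \<le> (y::real)"
    by (rule eventually_ge_at_top)
  ultimately show ?thesis
  proof eventually_elim
    case (elim y)
    with True pre_weight_nonneg[OF assms, of "exp y"] show ?case
      by (simp add: field_simps)
  qed
next
  case False
  have "\<forall>\<^sub>F y in at_top. 0 \<le> (y::real)"
    by (rule eventually_ge_at_top)
  then show ?thesis
  proof eventually_elim
    case (elim y)
    then have "c * y \<le> 0"
      using False by (simp add: mult_nonpos_nonneg)
    with pre_weight_nonneg[OF assms, of "exp y"] show ?case
      by simp
  qed
qed

(* Without this, the SUP in phi_star would be an unspecified value of a conditionally
   complete lattice. *)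
lemma bdd_above_phi_star_image:
  assumes "pre_weight \<sigma>"
  shows "bdd_above ((\<lambda>y. x * y - \<sigma> (exp y)) ` {0..})"
proof -
  obtain Y where Y: "\<And>y. Y \<le> y \<Longrightarrow> x * y \<le> \<sigma> (exp y)"
    using pre_weight_eventually_linear_le[OF assms, of x]
    by (auto simp: eventually_at_top_linorder)
  have "x * y - \<sigma> (exp y) \<le> \<bar>x\<bar> * \<bar>Y\<bar>" if "0 \<le> y" for y
  proof (cases "Y \<le> y")
    case True
    then show ?thesis using Y[OF True] by (simp add: abs_mult[symmetric])
  next
    case False
    have "x * y \<le> \<bar>x\<bar> * y"
      using \<open>0 \<le> y\<close> by (metis abs_ge_self abs_mult abs_of_nonneg)
    also have "\<dots> \<le> \<bar>x\<bar> * \<bar>Y\<bar>"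
      using False by (intro mult_left_mono) auto
    finally have "x * y \<le> \<bar>x\<bar> * \<bar>Y\<bar>" .
    then show ?thesis using pre_weight_nonneg[OF assms, of "exp y"] by simp
  qed
  then show ?thesis by (intro bdd_aboveI[of _ "\<bar>x\<bar> * \<bar>Y\<bar>"]) auto
qed

lemma phi_star_le_scaled:
  assumes "pre_weight \<sigma>" and "0 \<le> x" and "x \<le> x'" and "0 < x'"
  shows "phi_star \<sigma> (x * t) \<le> x / x' * phi_star \<sigma> (x' * t)"
  unfolding phi_star_def[of \<sigma> "x * t"]
proof (rule cSUP_least)
  fix y :: real
  assume y: "y \<in> {0..}"
  have "x' * t * y - \<sigma> (exp y) \<le> phi_star \<sigma> (x' * t)"
    unfolding phi_star_def by (rule cSUP_upper[OF y bdd_above_phi_star_image[OF assms(1)]])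
  then have "x / x' * (x' * t * y - \<sigma> (exp y)) \<le> x / x' * phi_star \<sigma> (x' * t)"
    using assms by (intro mult_left_mono) auto
  moreover have "x / x' * (x' * t * y - \<sigma> (exp y)) = x * t * y - x / x' * \<sigma> (exp y)"
    using assms by (simp add: field_simps)
  moreover have "x / x' * \<sigma> (exp y) \<le> \<sigma> (exp y)"
    using assms pre_weight_nonneg[OF assms(1), of "exp y"]
    by (intro mult_left_le_one_le) auto
  ultimately show "x * t * y - \<sigma> (exp y) \<le> x / x' * phi_star \<sigma> (x' * t)"
    by linarith
qed auto

lemma S_seq_mono:
  assumes "pre_weight \<sigma>" and "0 < x" and "x \<le> x'"
  shows "S_seq \<sigma> x j \<le> S_seq \<sigma> x' j"
proof -
  have "phi_star \<sigma> (x * real j) \<le> x / x' * phi_star \<sigma> (x' * real j)"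
    using assms by (intro phi_star_le_scaled) auto
  then have "1 / x * phi_star \<sigma> (x * real j) \<le> 1 / x' * phi_star \<sigma> (x' * real j)"
    using assms by (simp add: field_simps)
  then show ?thesis
    unfolding S_seq_def by simp
qed

lemma Lweight_pos: "1 \<le> k \<Longrightarrow> 0 < Lweight \<sigma> k j"
  unfolding Lweight_def S_seq_def by simp

lemma Lweight_mono:
  assumes "pre_weight \<sigma>" and "1 \<le> k" and "k \<le> l"
  shows "Lweight \<sigma> k j \<le> Lweight \<sigma> l j"
  unfolding Lweight_def
  using assms by (intro mult_mono power_mono S_seq_mono) (auto simp: S_seq_def)

lemma Lweight_le_power_ratio:
  assumes "pre_weight \<sigma>" and "1 \<le> k" and "k \<le> l"
  shows "Lweight \<sigma> k j \<le> (real k / real l) ^ j * Lweight \<sigma> l j"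
proof -
  have "Lweight \<sigma> k j \<le> real k ^ j * S_seq \<sigma> (real l) j"
    unfolding Lweight_def using assms by (intro mult_left_mono S_seq_mono) auto
  also have "\<dots> = (real k / real l) ^ j * Lweight \<sigma> l j"
    unfolding Lweight_def using assms by (simp add: power_divide)
  finally show ?thesis .
qed

lemma Lweight_ratio_tendsto_zero:
  assumes "pre_weight \<sigma>" and "1 \<le> k" and "k < l"
  shows "(\<lambda>j. Lweight \<sigma> k j / Lweight \<sigma> l j) \<longlonglongrightarrow> 0"
proof (rule Lim_null_comparison)
  show "\<forall>\<^sub>F j in sequentially. norm (Lweight \<sigma> k j / Lweight \<sigma> l j) \<le> (real k / real l) ^ j"
    using assms Lweight_le_power_ratio[OF assms(1,2), of l] Lweight_pos[of k] Lweight_pos[of l]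
    by (simp add: divide_le_eq abs_of_pos)
  show "(\<lambda>j. (real k / real l) ^ j) \<longlonglongrightarrow> 0"
    using assms by (intro LIMSEQ_power_zero) simp
qed

lemma mem_Lambda_iff:
  assumes "1 \<le> k"
  shows "a \<in> Lambda \<sigma> k \<longleftrightarrow> (\<exists>B. \<forall>j. cmod (a j) \<le> B * Lweight \<sigma> k j)"
  unfolding Lambda_def bdd_above_def
  using Lweight_pos[OF assms] by (auto simp: divide_le_eq)

lemma norm_le_Lnorm:
  assumes "1 \<le> k" and "a \<in> Lambda \<sigma> k"
  shows "cmod (a j) \<le> Lnorm \<sigma> k a * Lweight \<sigma> k j"
proof -
  have "cmod (a j) / Lweight \<sigma> k j \<le> Lnorm \<sigma> k a"
    using assms(2) unfolding Lambda_def Lnorm_def by (auto intro: cSUP_upper)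
  then show ?thesis
    using Lweight_pos[OF assms(1)] by (simp add: divide_le_eq)
qed

lemma Lambda_mono:
  assumes "pre_weight \<sigma>" and "1 \<le> k" and "k \<le> l"
  shows "Lambda \<sigma> k \<subseteq> Lambda \<sigma> l"
proof
  fix a
  assume "a \<in> Lambda \<sigma> k"
  then obtain B where B: "\<And>j. cmod (a j) \<le> B * Lweight \<sigma> k j"
    using mem_Lambda_iff[OF assms(2)] by auto
  have "cmod (a j) \<le> max B 0 * Lweight \<sigma> l j" for j
  proof -
    have "cmod (a j) \<le> B * Lweight \<sigma> k j"
      by (rule B)
    also have "\<dots> \<le> max B 0 * Lweight \<sigma> k j"
      using Lweight_pos[OF assms(2), of \<sigma> j] by (intro mult_right_mono) auto
    also have "\<dots> \<le> max B 0 * Lweight \<sigma> l j"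
      using assms by (intro mult_left_mono Lweight_mono) auto
    finally show ?thesis .
  qed
  then show "a \<in> Lambda \<sigma> l"
    using mem_Lambda_iff[of l] assms by auto
qed

theorem lemmaA2:
  fixes \<sigma> :: "real \<Rightarrow> real" and k :: nat
  assumes "pre_weight \<sigma>" and "k \<ge> 1"
  shows "compact_inclusion \<sigma> k (k + 1)"
proof -
  have ratio: "(\<lambda>j. Lweight \<sigma> k j / Lweight \<sigma> (k + 1) j) \<longlonglongrightarrow> 0"
    using assms by (intro Lweight_ratio_tendsto_zero) auto
  have "\<exists>r b. strict_mono r \<and> b \<in> Lambda \<sigma> (k + 1) \<and>
          (\<lambda>n. Lnorm \<sigma> (k + 1) (\<lambda>j. u (r n) j - b j)) \<longlonglongrightarrow> 0"
    if u: "\<And>n. u n \<in> Lambda \<sigma> k" and B: "\<And>n. Lnorm \<sigma> k (u n) \<le> B"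
    for u :: "nat \<Rightarrow> nat \<Rightarrow> complex" and B
  proof -
    have "cmod (u n j) \<le> B * Lweight \<sigma> k j" for n j
      by (meson B Lweight_pos assms(2) less_imp_le mult_right_mono norm_le_Lnorm order_trans u)
    from weighted_sup_convergent_subseq[of "Lweight \<sigma> (k + 1)" "Lweight \<sigma> k" u B,
        OF Lweight_pos ratio this]
    show ?thesis
      unfolding Lambda_def Lnorm_def by auto
  qed
  then show ?thesis
    unfolding compact_inclusion_def using Lambda_mono[OF assms, of "k + 1"] by auto
qed

end
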